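(* Let $r\in\mathbb{N}$, $r\ge2$, and let $\underline{m}=(m_0,m_1,m_2,m_3)\in\mathbb{N}^4$ be such that for a single $\ell\in\{0,1,2,3\}$, $\gcd(m_\ell,r)=K$ and $\gcd(m_i,r)=1$ for $i\ne\ell$. Let $t\in\{0,\dots,K-1\}$. Then: (1) for $i<\ell$, there are $\frac{r}{K}$ 1-step admissible paths from $(v_i,0)$ to $(v_\ell,t)$; (2) for $i>\ell$, there are $\frac{r}{K}$ 1-step admissible paths from $(v_\ell,t)$ to $(v_i,0)$.
   Context: $\Lambda=L_7\times_c\mathbb{Z}_r$ is the directed graph with vertices $(v_i,k)$, $0\le i\le 3$, $k\in\mathbb{Z}_r$, and edges $(e_{ij},k)$, $0\le i\le j\le 3$, $k\in\mathbb{Z}_r$, with source $(v_i,k-m_i\bmod r)$ and range $(v_j,k)$; the vertices $(v_i,k)$, $k\in\mathbb{Z}_r$, form level $i$. A path is a finite sequence of edges each starting at the range of the previous. A path of length at least one from $(v_i,s)$ to $(v_j,t)$ is admissible if none of the vertices it passes through other than its source and range lies in $\{(v_p,k): \min(i,j)\le p\le \max(i,j),\ 0\le k\le\gcd(m_p,r)-1\}$. An admissible path is $k$-step if the set of levels containing its vertices (including source and range) has exactly $k+1$ elements; in particular a 1-step path only visits the level of its source and the level of its range. *)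

theory Defs
  imports Main
begin

text \<open>A vertex (v_i,k) is the pair (i,k) with i \<le> 3, k < r.
  An edge (e_ij,k) is the triple (i,j,k) with i \<le> j \<le> 3, k < r.\<close>

type_synonym vert = "nat \<times> nat"
type_synonym edge = "nat \<times> nat \<times> nat"

definition L7_vertices :: "nat \<Rightarrow> vert set" where
  "L7_vertices r = {(i,k). i \<le> 3 \<and> k < r}"

definition L7_edges :: "nat \<Rightarrow> edge set" where
  "L7_edges r = {(i,j,k). i \<le> j \<and> j \<le> 3 \<and> k < r}"

fun esrc :: "(nat \<Rightarrow> nat) \<Rightarrow> nat \<Rightarrow> edge \<Rightarrow> vert" where
  "esrc m r (i,j,k) = (i, nat ((int k - int (m i)) mod int r))"

fun erng :: "edge \<Rightarrow> vert" where
  "erng (i,j,k) = (j,k)"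

definition is_path :: "(nat \<Rightarrow> nat) \<Rightarrow> nat \<Rightarrow> edge list \<Rightarrow> bool" where
  "is_path m r p \<longleftrightarrow> p \<noteq> [] \<and> set p \<subseteq> L7_edges r \<and>
     (\<forall>n. Suc n < length p \<longrightarrow> erng (p ! n) = esrc m r (p ! Suc n))"

definition path_src :: "(nat \<Rightarrow> nat) \<Rightarrow> nat \<Rightarrow> edge list \<Rightarrow> vert" where
  "path_src m r p = esrc m r (hd p)"

definition path_rng :: "edge list \<Rightarrow> vert" where
  "path_rng p = erng (last p)"

definition path_verts :: "(nat \<Rightarrow> nat) \<Rightarrow> nat \<Rightarrow> edge list \<Rightarrow> vert list" where
  "path_verts m r p = esrc m r (hd p) # map erng p"

definition interior_verts :: "edge list \<Rightarrow> vert list" where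
  "interior_verts p = map erng (butlast p)"

definition forbidden :: "(nat \<Rightarrow> nat) \<Rightarrow> nat \<Rightarrow> nat \<Rightarrow> nat \<Rightarrow> vert set" where
  "forbidden m r i j = {(q,k). min i j \<le> q \<and> q \<le> max i j \<and> k \<le> gcd (m q) r - 1}"

definition admissible :: "(nat \<Rightarrow> nat) \<Rightarrow> nat \<Rightarrow> vert \<Rightarrow> vert \<Rightarrow> edge list \<Rightarrow> bool" where
  "admissible m r u w p \<longleftrightarrow> is_path m r p \<and> path_src m r p = u \<and> path_rng p = w \<and>
     set (interior_verts p) \<inter> forbidden m r (fst u) (fst w) = {}"

definition k_step_adm :: "(nat \<Rightarrow> nat) \<Rightarrow> nat \<Rightarrow> nat \<Rightarrow> vert \<Rightarrow> vert \<Rightarrow> edge list \<Rightarrow> bool" where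
  "k_step_adm m r k u w p \<longleftrightarrow> admissible m r u w p \<and>
     card (fst ` set (path_verts m r p)) = k + 1"

end

(* A 1-step path from level q1 to a level q2 > q1 consists of a loops at q1, one edge from q1 to
   q2 and b loops at q2; it is determined by its source and by (a, b), and along it the second
   coordinate moves through Z_r by steps of m_q1 and then of m_q2.  Admissibility says that the
   intermediate points at level q avoid [0, gcd (m_q) r).
   If gcd s r = K then x + <s> is a coset of K Z_r: it has r/K elements and meets [0, K) exactly
   once.  For paths into (v_l, t) this leaves b < r/K free and forces a (the first n with
   n m_i = t - b m_l, m_i being a unit); for paths out of (v_l, t) it leaves a < r/K free and
   forces b (the first time the walk reaches 0). *)
theory Submission
  imports Defs "HOL-Number_Theory.Cong"
begin

lemma mod_add_eq_iff_dvd: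
  fixes x y r :: nat
  shows "(x + y) mod r = x mod r \<longleftrightarrow> r dvd y"
  by (metis cong_add_lcancel_0_nat cong_0_iff cong_def)

lemma dvd_mult_iff_div_gcd_dvd:
  fixes r s e :: nat
  assumes "0 < r"
  shows "r dvd e * s \<longleftrightarrow> r div gcd s r dvd e"
proof -
  define g where "g = gcd s r"
  have "0 < g" using assms by (simp add: g_def)
  obtain r' s' where r: "r = g * r'" and s: "s = g * s'"
    unfolding g_def by (metis gcd_dvd1 gcd_dvd2 dvdE)
  have "coprime r' s'"
    using div_gcd_coprime[of s r] assms \<open>0 < g\<close> r s unfolding g_def[symmetric]
    by (simp add: coprime_commute)
  then have "r dvd e * s \<longleftrightarrow> r' dvd e"
    using \<open>0 < g\<close> r s by (simp add: mult.left_commute coprime_dvd_mult_left_iff)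
  moreover have "r div g = r'" using \<open>0 < g\<close> r by simp
  ultimately show ?thesis by (simp add: g_def)
qed

lemma div_gcd_dvd_of_mod_less_gcd:
  fixes r s x e :: nat
  assumes "0 < r" "x mod r < gcd s r" "(x + e * s) mod r < gcd s r"
  shows "r div gcd s r dvd e"
proof -
  let ?g = "gcd s r"
  have "(x + e * s) mod r = (x + e * s) mod ?g"
    using assms(3) by (metis gcd_dvd2 mod_less mod_mod_cancel)
  also have "\<dots> = x mod ?g"
    by (metis dvd_mult gcd_dvd1 mod_add_right_eq add.right_neutral dvd_imp_mod_0)
  also have "\<dots> = x mod r"
    using assms(2) by (metis gcd_dvd2 mod_less mod_mod_cancel)
  finally have "r dvd e * s" by (simp add: mod_add_eq_iff_dvd)
  then show ?thesis using dvd_mult_iff_div_gcd_dvd[OF assms(1)] by blast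
qed

lemma coprime_ex_mod_add_mult_eq:
  fixes r s x y :: nat
  assumes "coprime s r" "0 < r"
  shows "\<exists>n. (x + n * s) mod r = y mod r"
proof -
  obtain u where u: "[s * u = 1] (mod r)"
    using cong_solve_coprime_nat[OF assms(1)] by auto
  define z where "z = y + (r - 1) * x" \<comment> \<open>\<open>(r - 1) * x\<close> stands for \<open>-x\<close> modulo \<open>r\<close>\<close>
  have "[s * u * z = 1 * z] (mod r)" using u by (rule cong_mult) (rule cong_refl)
  then have "[x + (u * z) * s = x + z] (mod r)"
    by (simp add: cong_add_lcancel_nat ac_simps)
  moreover have "x + z = y + r * x"
    using assms(2) by (cases r) (simp_all add: z_def algebra_simps)
  ultimately show ?thesis unfolding cong_def by (metis mod_mult_self2)
qed

lemma card_pairs_eq_card_fst: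
  assumes "\<And>a b b'. C a b \<Longrightarrow> C a b' \<Longrightarrow> b = b'"
  shows "card {(a, b). C a b} = card {a. \<exists>b. C a b}"
proof -
  have "inj_on fst {(a, b). C a b}" using assms by (auto intro: inj_onI)
  moreover have "fst ` {(a, b). C a b} = {a. \<exists>b. C a b}" by force
  ultimately show ?thesis by (metis card_image)
qed

lemma card_pairs_eq_card_snd:
  assumes "\<And>a a' b. C a b \<Longrightarrow> C a' b \<Longrightarrow> a = a'"
  shows "card {(a, b). C a b} = card {b. \<exists>a. C a b}"
proof -
  have "inj_on snd {(a, b). C a b}" using assms by (auto intro: inj_onI)
  moreover have "snd ` {(a, b). C a b} = {b. \<exists>a. C a b}" by force
  ultimately show ?thesis by (metis card_image)
qed

lemma all_less_add_iff: "(\<forall>j<a + b. P j) \<longleftrightarrow> (\<forall>j<a. P j) \<and> (\<forall>d<b. P (a + d))"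
  for a b :: nat
  by (metis add_less_cancel_left le_add_diff_inverse not_less trans_less_add1)

text \<open>The second coordinates of a path with \<open>a\<close> loops at a level of weight \<open>s1\<close>, one edge up
  and \<open>b\<close> loops at a level of weight \<open>s2\<close>; \<open>K1\<close> and \<open>K2\<close> bound the forbidden residues
  at the two levels.\<close>

definition two_phase_walk ::
    "nat \<Rightarrow> nat \<Rightarrow> nat \<Rightarrow> nat \<Rightarrow> nat \<Rightarrow> nat \<Rightarrow> nat \<Rightarrow> nat \<Rightarrow> nat \<Rightarrow> bool" where
  "two_phase_walk r s1 s2 K1 K2 x y a b \<longleftrightarrow>
     (\<forall>j<a. K1 \<le> (x + (j + 1) * s1) mod r) \<and>
     (\<forall>d<b. K2 \<le> (x + (a + 1) * s1 + d * s2) mod r) \<and>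
     (x + (a + 1) * s1 + b * s2) mod r = y"

lemma two_phase_walk_unit_first_unique:
  assumes "two_phase_walk r s1 s2 1 K 0 t a b" "two_phase_walk r s1 s2 1 K 0 t a' b"
  shows "a = a'"
proof -
  have no_larger: False
    if "two_phase_walk r s1 s2 1 K 0 t a b" "two_phase_walk r s1 s2 1 K 0 t (a + e + 1) b" for a e
  proof -
    have "\<forall>j<a + e + 1. 1 \<le> (0 + (j + 1) * s1) mod r"
      using that(2) unfolding two_phase_walk_def by blast
    then have "e < a + e + 1 \<longrightarrow> 1 \<le> (0 + (e + 1) * s1) mod r" by blast
    then have "0 < ((e + 1) * s1) mod r" by simp
    moreover have "((a + 1) * s1 + b * s2 + (e + 1) * s1) mod r = ((a + 1) * s1 + b * s2) mod r"
      using that by (simp add: two_phase_walk_def algebra_simps)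
    ultimately show False by (simp add: mod_add_eq_iff_dvd)
  qed
  show ?thesis
  proof (cases a a' rule: linorder_cases)
    case less
    then obtain e where "a' = a + e + 1" using less_iff_Suc_add by auto
    then show ?thesis using no_larger assms by blast
  next
    case greater
    then obtain e where "a = a' + e + 1" using less_iff_Suc_add by auto
    then show ?thesis using no_larger assms by blast
  qed simp
qed

lemma two_phase_walk_unit_first_less:
  fixes r s1 s2 t :: nat
  assumes r: "0 < r" and t: "t < gcd s2 r" and walk: "two_phase_walk r s1 s2 1 (gcd s2 r) 0 t a b"
  shows "b < r div gcd s2 r"
proof (rule ccontr)
  let ?N = "r div gcd s2 r"
  assume "\<not> b < ?N"
  then obtain d where d: "b = d + ?N" by (metis le_iff_add add.commute not_less)
  have "r dvd ?N * s2" by (simp add: dvd_mult_iff_div_gcd_dvd[OF r])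
  then have "((a + 1) * s1 + d * s2) mod r = t"
    using walk mod_add_eq_iff_dvd[of "(a + 1) * s1 + d * s2" "?N * s2" r]
    by (simp add: two_phase_walk_def d algebra_simps)
  moreover have "d < b" using d r t by (simp add: div_greater_zero_iff dvd_imp_le)
  ultimately show False using walk t by (fastforce simp: two_phase_walk_def)
qed

lemma two_phase_walk_unit_first_exists:
  fixes r s1 s2 t :: nat
  assumes r: "0 < r" and s1: "coprime s1 r" and t: "t < gcd s2 r" and b: "b < r div gcd s2 r"
  obtains a where "two_phase_walk r s1 s2 1 (gcd s2 r) 0 t a b"
proof -
  let ?K = "gcd s2 r" and ?N = "r div gcd s2 r"
  let ?P = "\<lambda>a. ((a + 1) * s1 + b * s2) mod r = t"
  have "t < r" using r t by (meson dvd_imp_le gcd_dvd2 order_less_le_trans)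
  obtain n where "(b * s2 + s1 + n * s1) mod r = t mod r"
    using coprime_ex_mod_add_mult_eq[OF s1 r] by blast
  then have "?P n" using \<open>t < r\<close> by (simp add: algebra_simps)
  then have "\<exists>a. ?P a" ..
  define a where "a = (LEAST a. ?P a)"
  have "?P a" unfolding a_def by (rule LeastI_ex) fact
  have "\<not> r dvd (j + 1) * s1" if "j < a" for j
  proof
    assume "r dvd (j + 1) * s1"
    obtain c where c: "a = c + (j + 1)" using \<open>j < a\<close> by (auto simp: less_iff_Suc_add)
    have "?P c" using \<open>?P a\<close> \<open>r dvd (j + 1) * s1\<close>
      mod_add_eq_iff_dvd[of "(c + 1) * s1 + b * s2" "(j + 1) * s1" r] by (simp add: c algebra_simps)
    moreover have "c < a" using c by simp
    ultimately show False unfolding a_def using not_less_Least by blast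
  qed
  moreover have "?K \<le> ((a + 1) * s1 + d * s2) mod r" if "d < b" for d
  proof (rule ccontr)
    assume "\<not> ?K \<le> ((a + 1) * s1 + d * s2) mod r"
    obtain e where e: "b = d + e" using \<open>d < b\<close> by (metis less_imp_add_positive)
    have "?N dvd e"
      using div_gcd_dvd_of_mod_less_gcd[OF r, of "(a + 1) * s1 + d * s2" s2 e] \<open>?P a\<close> t
        \<open>\<not> ?K \<le> ((a + 1) * s1 + d * s2) mod r\<close> by (simp add: e algebra_simps)
    then show False using e that b by (auto dest: dvd_imp_le)
  qed
  ultimately have "two_phase_walk r s1 s2 1 ?K 0 t a b"
    using \<open>?P a\<close> by (simp add: two_phase_walk_def Suc_le_eq dvd_eq_mod_eq_0)
  then show thesis by (rule that)
qed

lemma card_two_phase_walk_unit_first: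
  fixes r s1 s2 t :: nat
  assumes "0 < r" "coprime s1 r" "t < gcd s2 r"
  shows "card {(a, b). two_phase_walk r s1 s2 1 (gcd s2 r) 0 t a b} = r div gcd s2 r"
proof -
  have "card {(a, b). two_phase_walk r s1 s2 1 (gcd s2 r) 0 t a b} =
      card {b. \<exists>a. two_phase_walk r s1 s2 1 (gcd s2 r) 0 t a b}"
    by (rule card_pairs_eq_card_snd) (rule two_phase_walk_unit_first_unique)
  also have "{b. \<exists>a. two_phase_walk r s1 s2 1 (gcd s2 r) 0 t a b} = {..<r div gcd s2 r}"
    using assms two_phase_walk_unit_first_less two_phase_walk_unit_first_exists by blast
  finally show ?thesis by simp
qed

lemma two_phase_walk_unit_last_less:
  fixes r s1 s2 t :: nat
  assumes r: "0 < r" and t: "t < gcd s1 r" and walk: "two_phase_walk r s1 s2 (gcd s1 r) 1 t 0 a b"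
  shows "a < r div gcd s1 r"
proof (rule ccontr)
  let ?K = "gcd s1 r" and ?N = "r div gcd s1 r"
  have "?N \<noteq> 0" using r t by (simp add: div_greater_zero_iff dvd_imp_le)
  have "t < r" using r t by (meson dvd_imp_le gcd_dvd2 order_less_le_trans)
  assume "\<not> a < ?N"
  then have "?N - 1 < a" using \<open>?N \<noteq> 0\<close> by simp
  then have "?K \<le> (t + ?N * s1) mod r"
    using walk \<open>?N \<noteq> 0\<close> unfolding two_phase_walk_def by (metis Suc_eq_plus1 Suc_pred' not_gr0)
  moreover have "r dvd ?N * s1" by (simp add: dvd_mult_iff_div_gcd_dvd[OF r])
  then have "(t + ?N * s1) mod r = t"
    using mod_add_eq_iff_dvd[of t "?N * s1" r] \<open>t < r\<close> by simp
  ultimately show False using t by simp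
qed

lemma two_phase_walk_unit_last_exists:
  fixes r s1 s2 t :: nat
  assumes r: "0 < r" and s2: "coprime s2 r" and t: "t < gcd s1 r" and a: "a < r div gcd s1 r"
  obtains b where "two_phase_walk r s1 s2 (gcd s1 r) 1 t 0 a b"
proof -
  let ?K = "gcd s1 r" and ?N = "r div gcd s1 r"
  let ?P = "\<lambda>b. (t + (a + 1) * s1 + b * s2) mod r = 0"
  have "t < r" using r t by (meson dvd_imp_le gcd_dvd2 order_less_le_trans)
  obtain n where "(t + (a + 1) * s1 + n * s2) mod r = 0 mod r"
    using coprime_ex_mod_add_mult_eq[OF s2 r] by blast
  then have "\<exists>b. ?P b" by (intro exI[of _ n]) simp
  define b where "b = (LEAST b. ?P b)"
  have "?P b" unfolding b_def by (rule LeastI_ex) fact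
  moreover have "\<forall>d<b. \<not> ?P d" unfolding b_def using not_less_Least by blast
  moreover have "?K \<le> (t + (j + 1) * s1) mod r" if "j < a" for j
  proof (rule ccontr)
    assume "\<not> ?K \<le> (t + (j + 1) * s1) mod r"
    then have "?N dvd j + 1"
      using div_gcd_dvd_of_mod_less_gcd[OF r, of t s1 "j + 1"] t \<open>t < r\<close> by simp
    then show False using that a by (auto dest: dvd_imp_le)
  qed
  ultimately have "two_phase_walk r s1 s2 ?K 1 t 0 a b" by (simp add: two_phase_walk_def Suc_le_eq)
  then show thesis by (rule that)
qed

lemma card_two_phase_walk_unit_last:
  fixes r s1 s2 t :: nat
  assumes "0 < r" "coprime s2 r" "t < gcd s1 r"
  shows "card {(a, b). two_phase_walk r s1 s2 (gcd s1 r) 1 t 0 a b} = r div gcd s1 r"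
proof -
  have "card {(a, b). two_phase_walk r s1 s2 (gcd s1 r) 1 t 0 a b} =
      card {a. \<exists>b. two_phase_walk r s1 s2 (gcd s1 r) 1 t 0 a b}"
    by (rule card_pairs_eq_card_fst)
      (unfold two_phase_walk_def, metis linorder_neqE_nat not_one_le_zero)
  also have "{a. \<exists>b. two_phase_walk r s1 s2 (gcd s1 r) 1 t 0 a b} = {..<r div gcd s1 r}"
    using assms two_phase_walk_unit_last_less two_phase_walk_unit_last_exists by blast
  finally show ?thesis by simp
qed

fun base_edge :: "edge \<Rightarrow> nat \<times> nat" where
  "base_edge (i, j, k) = (i, j)"

lemma fst_esrc [simp]: "fst (esrc m r e) = fst e"
  by (cases e) simp

lemma fst_erng [simp]: "fst (erng e) = fst (snd e)"
  by (cases e) simp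

lemma esrc_add_mod: "x < r \<Longrightarrow> esrc m r (i, j, (x + m i) mod r) = (i, x)"
  by (simp add: zmod_int mod_diff_left_eq)

lemma edge_eqI:
  assumes "e \<in> L7_edges r" "e' \<in> L7_edges r"
    and "base_edge e = base_edge e'" "esrc m r e = esrc m r e'"
  shows "e = e'"
proof -
  obtain i j k k' where e: "e = (i, j, k)" "e' = (i, j, k')" "k < r" "k' < r"
    using assms(1-3) by (cases e; cases e') (auto simp: L7_edges_def)
  then have "(int k - int (m i)) mod int r = (int k' - int (m i)) mod int r"
    using assms(4) by (simp add: eq_nat_nat_iff)
  then have "(int k - int (m i) + int (m i)) mod int r = (int k' - int (m i) + int (m i)) mod int r"
    by (rule mod_add_cong) (rule refl)
  then show ?thesis using e by (simp add: zmod_int[symmetric])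
qed

lemma path_eqI:
  assumes p: "is_path m r p" and p': "is_path m r p'"
    and src: "path_src m r p = path_src m r p'" and base: "map base_edge p = map base_edge p'"
  shows "p = p'"
proof (rule nth_equalityI)
  show len: "length p = length p'" using arg_cong[OF base, of length] by simp
  have edges_eqI: "p ! j = p' ! j" if "j < length p" "esrc m r (p ! j) = esrc m r (p' ! j)" for j
  proof (rule edge_eqI)
    show "p ! j \<in> L7_edges r" "p' ! j \<in> L7_edges r"
      using p p' that len by (auto simp: is_path_def)
    show "base_edge (p ! j) = base_edge (p' ! j)" using base that len by (metis nth_map)
  qed (use that in simp)
  show "p ! j = p' ! j" if "j < length p" for j
    using that
  proof (induction j)
    case 0
    then show ?case using p p' src by (intro edges_eqI) (simp_all add: path_src_def is_path_def hd_conv_nth)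
  next
    case (Suc j)
    then have "esrc m r (p ! Suc j) = esrc m r (p' ! Suc j)"
      using p p' len unfolding is_path_def by (metis Suc_lessD)
    then show ?case using Suc.prems by (rule edges_eqI[rotated])
  qed
qed

lemma path_levels:
  "p \<noteq> [] \<Longrightarrow> fst ` set (path_verts m r p) = insert (fst (hd p)) ((\<lambda>e. fst (snd e)) ` set p)"
  by (auto simp: path_verts_def image_image)

lemma is_path_src_level_Suc:
  "is_path m r p \<Longrightarrow> Suc j < length p \<Longrightarrow> fst (p ! Suc j) = fst (snd (p ! j))"
  unfolding is_path_def by (metis fst_erng fst_esrc)

lemma is_path_src_level_le:
  assumes "is_path m r p" "j < length p"
  shows "fst (p ! j) \<le> fst (snd (p ! j))"
proof -
  have "p ! j \<in> L7_edges r" using assms by (auto simp: is_path_def)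
  then show ?thesis by (cases "p ! j") (simp add: L7_edges_def)
qed

lemma is_path_rng_level_mono:
  assumes "is_path m r p" "i \<le> j" "j < length p"
  shows "fst (snd (p ! i)) \<le> fst (snd (p ! j))"
  using assms(2,3)
proof (induction j rule: dec_induct)
  case (step j)
  then show ?case
    using is_path_src_level_Suc[OF assms(1)] is_path_src_level_le[OF assms(1)]
    by (metis Suc_lessD order_trans)
qed simp

lemma mem_forbidden_iff:
  assumes "0 < r" "min i j \<le> q" "q \<le> max i j"
  shows "(q, k) \<in> forbidden m r i j \<longleftrightarrow> k < gcd (m q) r"
proof -
  have "0 < gcd (m q) r" using assms(1) by simp
  then have "k \<le> gcd (m q) r - 1 \<longleftrightarrow> k < gcd (m q) r" by linarith
  then show ?thesis using assms(2,3) by (simp add: forbidden_def)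
qed

definition level_at :: "nat \<Rightarrow> nat \<Rightarrow> nat \<Rightarrow> nat \<Rightarrow> nat" where
  "level_at q1 q2 a j = (if j < a then q1 else q2)"

definition two_level_pos :: "(nat \<Rightarrow> nat) \<Rightarrow> nat \<Rightarrow> nat \<Rightarrow> nat \<Rightarrow> nat \<Rightarrow> nat \<Rightarrow> nat \<Rightarrow> nat" where
  "two_level_pos m r q1 q2 x a j = (x + (min j a + 1) * m q1 + (j - a) * m q2) mod r"

text \<open>A path with \<open>a\<close> loops at level \<open>q1\<close>, then the edge from \<open>q1\<close> to \<open>q2\<close>, then \<open>b\<close> loops
  at \<open>q2\<close>: its \<open>j\<close>-th edge runs from level \<open>level_at q1 q2 (Suc a) j\<close> to level
  \<open>level_at q1 q2 a j\<close> and ends at second coordinate \<open>two_level_pos \<dots> j\<close>, where the truncated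
  difference \<open>j - a\<close> vanishes as long as the path stays at \<open>q1\<close>.\<close>

definition two_level_base_path :: "nat \<Rightarrow> nat \<Rightarrow> nat \<Rightarrow> nat \<Rightarrow> (nat \<times> nat) list" where
  "two_level_base_path q1 q2 a b =
     map (\<lambda>j. (level_at q1 q2 (Suc a) j, level_at q1 q2 a j)) [0..<a + b + 1]"

definition two_level_path ::
    "(nat \<Rightarrow> nat) \<Rightarrow> nat \<Rightarrow> nat \<Rightarrow> nat \<Rightarrow> nat \<Rightarrow> nat \<Rightarrow> nat \<Rightarrow> edge list" where
  "two_level_path m r q1 q2 x a b =
     map (\<lambda>j. (level_at q1 q2 (Suc a) j, level_at q1 q2 a j, two_level_pos m r q1 q2 x a j))
       [0..<a + b + 1]"

lemma two_level_pos_0: "two_level_pos m r q1 q2 x a 0 = (x + m q1) mod r"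
  by (simp add: two_level_pos_def)

lemma two_level_pos_Suc:
  "two_level_pos m r q1 q2 x a (Suc j) =
     (two_level_pos m r q1 q2 x a j + m (level_at q1 q2 a j)) mod r"
proof (cases "j < a")
  case False
  then obtain d where "j = a + d" by (metis le_add_diff_inverse not_less)
  then show ?thesis by (simp add: two_level_pos_def level_at_def Suc_diff_le mod_simps algebra_simps)
qed (simp add: two_level_pos_def level_at_def mod_simps algebra_simps)

lemma two_level_pos_less: "0 < r \<Longrightarrow> two_level_pos m r q1 q2 x a j < r"
  by (simp add: two_level_pos_def)

lemma level_at_Suc_Suc [simp]: "level_at q1 q2 (Suc a) (Suc j) = level_at q1 q2 a j"
  by (simp add: level_at_def)

lemma two_level_path_nth:
  "j < a + b + 1 \<Longrightarrow>
   two_level_path m r q1 q2 x a b ! j =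
     (level_at q1 q2 (Suc a) j, level_at q1 q2 a j, two_level_pos m r q1 q2 x a j)"
  by (simp add: two_level_path_def del: upt_Suc)

lemma length_two_level_path [simp]: "length (two_level_path m r q1 q2 x a b) = a + b + 1"
  by (simp add: two_level_path_def)

lemma two_level_path_not_Nil [simp]: "two_level_path m r q1 q2 x a b \<noteq> []"
  by (simp add: two_level_path_def)

lemma is_path_two_level_path:
  assumes "0 < r" "q1 \<le> q2" "q2 \<le> 3"
  shows "is_path m r (two_level_path m r q1 q2 x a b)"
  unfolding is_path_def
proof (intro conjI allI impI)
  show "two_level_path m r q1 q2 x a b \<noteq> []" by simp
  show "set (two_level_path m r q1 q2 x a b) \<subseteq> L7_edges r"
    using assms by (auto simp: two_level_path_def L7_edges_def level_at_def two_level_pos_def)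
  fix n assume "Suc n < length (two_level_path m r q1 q2 x a b)"
  then show "erng (two_level_path m r q1 q2 x a b ! n) =
      esrc m r (two_level_path m r q1 q2 x a b ! Suc n)"
    using assms(1)
    by (simp add: two_level_path_nth two_level_pos_Suc esrc_add_mod two_level_pos_less del: esrc.simps)
qed

lemma path_src_two_level_path:
  "x < r \<Longrightarrow> path_src m r (two_level_path m r q1 q2 x a b) = (q1, x)"
  by (simp add: path_src_def hd_conv_nth two_level_path_nth two_level_pos_0 esrc_add_mod level_at_def
      del: esrc.simps)

lemma path_rng_two_level_path:
  "path_rng (two_level_path m r q1 q2 x a b) = (q2, two_level_pos m r q1 q2 x a (a + b))"
  by (simp add: path_rng_def last_conv_nth two_level_path_nth level_at_def)

lemma base_edges_two_level_path:
  "map base_edge (two_level_path m r q1 q2 x a b) =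
   two_level_base_path q1 q2 a b"
  by (simp add: two_level_path_def two_level_base_path_def del: upt_Suc)

lemma interior_verts_two_level_path:
  "interior_verts (two_level_path m r q1 q2 x a b) =
   map (\<lambda>j. (level_at q1 q2 a j, two_level_pos m r q1 q2 x a j)) [0..<a + b]"
  by (simp add: interior_verts_def two_level_path_def map_butlast[symmetric])

lemma levels_two_level_path:
  "fst ` set (path_verts m r (two_level_path m r q1 q2 x a b)) = {q1, q2}"
proof -
  have "(\<lambda>e. fst (snd e)) ` set (two_level_path m r q1 q2 x a b) = level_at q1 q2 a ` {0..<a + b + 1}"
    by (auto simp: two_level_path_def image_image simp del: upt_Suc)
  also have "\<dots> = (if a = 0 then {q2} else {q1, q2})"
    by (auto simp: level_at_def image_iff intro: bexI[of _ "a + b"] bexI[of _ 0])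
  finally show ?thesis
    by (simp add: path_levels hd_conv_nth two_level_path_nth level_at_def two_level_path_def del: upt_Suc)
qed

lemma two_level_path_inj:
  assumes "q1 \<noteq> q2" "two_level_path m r q1 q2 x a b = two_level_path m r q1 q2 x a' b'"
  shows "a = a' \<and> b = b'"
proof -
  have len: "a + b = a' + b'" using arg_cong[OF assms(2), of length] by simp
  have "level_at q1 q2 a j = level_at q1 q2 a' j" if "j < a + b + 1" for j
    using arg_cong[OF assms(2), of "\<lambda>p. fst (snd (p ! j))"] that len by (simp add: two_level_path_nth)
  from this[of a] this[of a'] have "a = a'"
    using assms(1) len by (auto simp: level_at_def split: if_splits)
  then show ?thesis using len by simp
qed

lemma one_step_path_levels:
  assumes "p \<noteq> []" "fst (path_src m r p) = q1" "fst (path_rng p) = q2" "q1 \<noteq> q2"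
    and "card (fst ` set (path_verts m r p)) = 2"
  shows "fst ` set (path_verts m r p) = {q1, q2}"
proof (rule card_subset_eq[symmetric])
  show "{q1, q2} \<subseteq> fst ` set (path_verts m r p)"
    using assms(1-3) by (auto simp: path_levels path_src_def path_rng_def)
qed (use assms(4,5) in simp_all)

lemma one_step_path_base_edges:
  assumes p: "is_path m r p" and src: "fst (path_src m r p) = q1" and rng: "fst (path_rng p) = q2"
    and "q1 < q2" and two: "card (fst ` set (path_verts m r p)) = 2"
  shows "\<exists>a b. map base_edge p = two_level_base_path q1 q2 a b"
proof -
  define n where "n = length p"
  define R where "R j = fst (snd (p ! j))" for j
  have "p \<noteq> []" using p by (simp add: is_path_def)
  then have "0 < n" by (simp add: n_def)
  have S0: "fst (p ! 0) = q1" using src \<open>p \<noteq> []\<close> by (simp add: path_src_def hd_conv_nth)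
  have R_last: "R (n - 1) = q2" using rng \<open>p \<noteq> []\<close> by (simp add: path_rng_def last_conv_nth R_def n_def)
  have R_cases: "R j = q1 \<or> R j = q2" if "j < n" for j
  proof -
    have "p ! j \<in> set p" using that by (simp add: n_def)
    then have "R j \<in> fst ` set (path_verts m r p)"
      unfolding path_levels[OF \<open>p \<noteq> []\<close>] R_def by blast
    then show ?thesis using one_step_path_levels[OF \<open>p \<noteq> []\<close> src rng _ two] \<open>q1 < q2\<close> by simp
  qed
  define a where "a = (LEAST j. R j = q2)"
  have "R a = q2" "a \<le> n - 1" unfolding a_def using R_last by (auto intro: LeastI Least_le)
  have R_eq: "R j = level_at q1 q2 a j" if "j < n" for j
  proof (cases "j < a")
    case True
    then show ?thesis using R_cases[OF that] not_less_Least[of j "\<lambda>j. R j = q2"]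
      by (simp add: level_at_def a_def)
  next
    case False
    then show ?thesis
      using R_cases[OF that] is_path_rng_level_mono[OF p, of a j] that \<open>R a = q2\<close> \<open>q1 < q2\<close>
      by (auto simp: level_at_def R_def n_def)
  qed
  have S_eq: "fst (p ! j) = level_at q1 q2 (Suc a) j" if "j < n" for j
    using that S0 is_path_src_level_Suc[OF p] R_eq by (cases j) (auto simp: level_at_def R_def n_def)
  define b where "b = n - 1 - a"
  have "n = a + b + 1" using \<open>a \<le> n - 1\<close> \<open>0 < n\<close> by (simp add: b_def)
  have "map base_edge p = two_level_base_path q1 q2 a b"
  proof (rule nth_equalityI)
    show "length (map base_edge p) = length (two_level_base_path q1 q2 a b)"
      using \<open>n = a + b + 1\<close> by (simp add: n_def two_level_base_path_def)
    fix j assume "j < length (map base_edge p)"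
    then have "j < n" by (simp add: n_def)
    then show "map base_edge p ! j = two_level_base_path q1 q2 a b ! j"
      using S_eq R_eq \<open>n = a + b + 1\<close>
      by (cases "p ! j")
        (simp add: n_def R_def two_level_base_path_def del: upt_Suc, metis fst_conv snd_conv)
  qed
  then show ?thesis by blast
qed

lemma one_step_admE:
  assumes adm: "k_step_adm m r 1 (q1, x) (q2, y) p" and "q1 < q2" "q2 \<le> 3" "x < r"
  obtains a b where "p = two_level_path m r q1 q2 x a b"
proof -
  have p: "is_path m r p" and src: "path_src m r p = (q1, x)" and rng: "path_rng p = (q2, y)"
    and "card (fst ` set (path_verts m r p)) = 2"
    using adm by (auto simp: k_step_adm_def admissible_def)
  then obtain a b where
    "map base_edge p = two_level_base_path q1 q2 a b"
    using one_step_path_base_edges[of m r p q1 q2] \<open>q1 < q2\<close> by auto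
  then have "p = two_level_path m r q1 q2 x a b"
    using assms(2-4) p src
    by (intro path_eqI[of m r])
      (simp_all add: is_path_two_level_path path_src_two_level_path base_edges_two_level_path)
  then show thesis by (rule that)
qed

lemma k_step_adm_two_level_path_iff:
  assumes "q1 < q2" "q2 \<le> 3" "x < r"
  shows "k_step_adm m r 1 (q1, x) (q2, y) (two_level_path m r q1 q2 x a b) \<longleftrightarrow>
    two_phase_walk r (m q1) (m q2) (gcd (m q1) r) (gcd (m q2) r) x y a b"
proof -
  have "0 < r" using assms(3) by simp
  have forbidden_iff:
      "(level_at q1 q2 a j, k) \<in> forbidden m r q1 q2 \<longleftrightarrow> k < gcd (m (level_at q1 q2 a j)) r" for j k
    using \<open>0 < r\<close> by (intro mem_forbidden_iff) (auto simp: level_at_def)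
  have "set (interior_verts (two_level_path m r q1 q2 x a b)) \<inter> forbidden m r q1 q2 = {} \<longleftrightarrow>
      (\<forall>j<a + b. (level_at q1 q2 a j, two_level_pos m r q1 q2 x a j) \<notin> forbidden m r q1 q2)"
    by (auto simp: interior_verts_two_level_path disjoint_iff)
  also have "\<dots> \<longleftrightarrow> (\<forall>j<a + b. gcd (m (level_at q1 q2 a j)) r \<le> two_level_pos m r q1 q2 x a j)"
    by (simp add: forbidden_iff not_less)
  also have "\<dots> \<longleftrightarrow> (\<forall>j<a. gcd (m q1) r \<le> (x + (j + 1) * m q1) mod r) \<and>
      (\<forall>d<b. gcd (m q2) r \<le> (x + (a + 1) * m q1 + d * m q2) mod r)"
    unfolding all_less_add_iff by (simp add: level_at_def two_level_pos_def)
  finally show ?thesis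
    using assms is_path_two_level_path[of r q1 q2 m x a b] path_src_two_level_path[of x r m q1 q2 a b]
      levels_two_level_path[of m r q1 q2 x a b]
    by (simp add: k_step_adm_def admissible_def two_phase_walk_def path_rng_two_level_path
        two_level_pos_def) blast
qed

lemma card_one_step_adm:
  assumes "q1 < q2" "q2 \<le> 3" "x < r"
  shows "card {p. k_step_adm m r 1 (q1, x) (q2, y) p} =
    card {(a, b). two_phase_walk r (m q1) (m q2) (gcd (m q1) r) (gcd (m q2) r) x y a b}"
proof -
  let ?W = "two_phase_walk r (m q1) (m q2) (gcd (m q1) r) (gcd (m q2) r) x y"
  have "k_step_adm m r 1 (q1, x) (q2, y) p \<longleftrightarrow>
      (\<exists>a b. ?W a b \<and> p = two_level_path m r q1 q2 x a b)" for p
    using assms k_step_adm_two_level_path_iff one_step_admE by metis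
  then have "{p. k_step_adm m r 1 (q1, x) (q2, y) p} =
      (\<lambda>(a, b). two_level_path m r q1 q2 x a b) ` {(a, b). ?W a b}"
    by auto
  moreover have "inj_on (\<lambda>(a, b). two_level_path m r q1 q2 x a b) {(a, b). ?W a b}"
    using two_level_path_inj[OF less_imp_neq[OF assms(1)]] by (auto simp: inj_on_def)
  ultimately show ?thesis by (simp add: card_image)
qed

theorem lemma6p2:
  fixes r K l t :: nat and m :: "nat \<Rightarrow> nat"
  assumes "r \<ge> 2"
    and "l \<le> 3"
    and "gcd (m l) r = K"
    and "\<forall>i\<le>3. i \<noteq> l \<longrightarrow> gcd (m i) r = 1"
    and "t < K"
  shows "(\<forall>i<l. card {p. k_step_adm m r 1 (i,0) (l,t) p} = r div K) \<and>
         (\<forall>i. l < i \<and> i \<le> 3 \<longrightarrow> card {p. k_step_adm m r 1 (l,t) (i,0) p} = r div K)"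
proof -
  have "0 < r" using assms(1) by simp
  have "t < r" using assms(3,5) \<open>0 < r\<close> by (metis dvd_imp_le gcd_dvd2 order_less_le_trans)
  have "t < gcd (m l) r" using assms(3,5) by simp
  have into_l: "card {p. k_step_adm m r 1 (i, 0) (l, t) p} = r div K" if "i < l" for i
  proof -
    have unit: "gcd (m i) r = 1" using that assms(2,4) by simp
    have "card {p. k_step_adm m r 1 (i, 0) (l, t) p} =
        card {(a, b). two_phase_walk r (m i) (m l) 1 (gcd (m l) r) 0 t a b}"
      using card_one_step_adm[OF that assms(2) \<open>0 < r\<close>, of m t] unfolding unit .
    also have "\<dots> = r div K"
      using card_two_phase_walk_unit_first[OF \<open>0 < r\<close> _ \<open>t < gcd (m l) r\<close>] unit assms(3)
      by (simp add: coprime_iff_gcd_eq_1)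
    finally show ?thesis .
  qed
  have out_of_l: "card {p. k_step_adm m r 1 (l, t) (i, 0) p} = r div K" if "l < i" "i \<le> 3" for i
  proof -
    have unit: "gcd (m i) r = 1" using that assms(4) by simp
    have "card {p. k_step_adm m r 1 (l, t) (i, 0) p} =
        card {(a, b). two_phase_walk r (m l) (m i) (gcd (m l) r) 1 t 0 a b}"
      using card_one_step_adm[OF that \<open>t < r\<close>, of m 0] unfolding unit .
    also have "\<dots> = r div K"
      using card_two_phase_walk_unit_last[OF \<open>0 < r\<close> _ \<open>t < gcd (m l) r\<close>] unit assms(3)
      by (simp add: coprime_iff_gcd_eq_1)
    finally show ?thesis .
  qed
  show ?thesis using into_l out_of_l by blast
qed

end
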